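(* For every $\alpha\in(0,1)$, every randomized online algorithm for non-clairvoyant dynamic bin packing whose expected total migrated size is at most an $\alpha$-fraction of the total size of the items has competitive ratio at least $\frac14\left\lfloor\frac{1}{4\alpha}\right\rfloor$.
   Context: Dynamic bin packing: bins have capacity $1$; items arrive online at times $a_i\ge0$ with size $s_i\in[0,1]$ and duration $d_i>0$ (only the size is revealed at arrival), present during $[a_i,a_i+d_i)$. Each item is placed on arrival into an open bin with enough remaining capacity or a new bin; a migration moves an already placed item to another bin. In the size-cost model each migration of item $i$ costs $s_i$; the total size of the items is $\sum_i s_i$. Cost = total active time $\int_0^\infty(\text{number of nonempty bins at } t)\,dt$; $\mathrm{OPT}(I)=\int_0^\infty\mathrm{OPT}_t\,dt$ with $\mathrm{OPT}_t$ the minimum number of unit bins to pack the items present at time $t$. Competitive ratio at least $\gamma$: for every $\beta<\gamma$ some instance has expected cost $>\beta\,\mathrm{OPT}$. *)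

theory Defs
  imports "HOL-Probability.Probability"
begin

type_synonym item = "real \<times> real \<times> real"

type_synonym binst = "item list"

(* Placement of one item: (initial bin chosen at arrival,
   list of migrations (time tau, target bin) in increasing time order). *)
type_synonym placement = "nat \<times> (real \<times> nat) list"

type_synonym schedule = "nat \<Rightarrow> placement"

definition arr :: "item \<Rightarrow> real" where "arr x = fst x"
definition sz :: "item \<Rightarrow> real" where "sz x = fst (snd x)"
definition dur :: "item \<Rightarrow> real" where "dur x = snd (snd x)"

definition valid_instance :: "binst \<Rightarrow> bool" where
  "valid_instance I \<longleftrightarrow>
     (\<forall>x\<in>set I. 0 \<le> arr x \<and> 0 \<le> sz x \<and> sz x \<le> 1 \<and> 0 < dur x)
     \<and> sorted (map arr I)"

definition present :: "binst \<Rightarrow> nat \<Rightarrow> real \<Rightarrow> bool" where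
  "present I i t \<longleftrightarrow> i < length I \<and> arr (I ! i) \<le> t \<and> t < arr (I ! i) + dur (I ! i)"

(* bin of item i at time t: the target of the last migration at time \<le> t,
   or the initial bin if there is none *)
definition bin_of :: "schedule \<Rightarrow> nat \<Rightarrow> real \<Rightarrow> nat" where
  "bin_of S i t = foldl (\<lambda>b m. if fst m \<le> t then snd m else b) (fst (S i)) (snd (S i))"

definition valid_schedule :: "binst \<Rightarrow> schedule \<Rightarrow> bool" where
  "valid_schedule I S \<longleftrightarrow>
     (\<forall>i < length I.
        sorted_wrt (\<lambda>m m'. fst m < fst m') (snd (S i)) \<and>
        (\<forall>m \<in> set (snd (S i)). arr (I ! i) < fst m \<and> fst m < arr (I ! i) + dur (I ! i)))
     \<and> (\<forall>t k. (\<Sum>i \<in> {i. present I i t \<and> bin_of S i t = k}. sz (I ! i)) \<le> 1)"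

definition nonempty_bins :: "binst \<Rightarrow> schedule \<Rightarrow> real \<Rightarrow> nat" where
  "nonempty_bins I S t = card ((\<lambda>i. bin_of S i t) ` {i. present I i t})"

definition cost :: "binst \<Rightarrow> schedule \<Rightarrow> ennreal" where
  "cost I S = (\<integral>\<^sup>+ t. ennreal (real (nonempty_bins I S t)) \<partial>lborel)"

definition migration_cost :: "binst \<Rightarrow> schedule \<Rightarrow> real" where
  "migration_cost I S = (\<Sum>i < length I. sz (I ! i) * real (length (snd (S i))))"

definition total_size :: "binst \<Rightarrow> real" where
  "total_size I = (\<Sum>i < length I. sz (I ! i))"

definition opt_at :: "binst \<Rightarrow> real \<Rightarrow> nat" where
  "opt_at I t = (LEAST k. \<exists>f :: nat \<Rightarrow> nat.
      (\<forall>i. present I i t \<longrightarrow> f i < k) \<and>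
      (\<forall>j < k. (\<Sum>i \<in> {i. present I i t \<and> f i = j}. sz (I ! i)) \<le> 1))"

definition OPT :: "binst \<Rightarrow> ennreal" where
  "OPT I = (\<integral>\<^sup>+ t. ennreal (real (opt_at I t)) \<partial>lborel)"

(* what a non-clairvoyant online algorithm knows at time t: the items that
   have arrived by t (arrival time, size), and for each whether and when it
   has departed by time t *)
definition view :: "binst \<Rightarrow> real \<Rightarrow> (real \<times> real \<times> real option) list" where
  "view I t = map (\<lambda>x. (arr x, sz x,
                         if arr x + dur x \<le> t then Some (arr x + dur x) else None))
                  (filter (\<lambda>x. arr x \<le> t) I)"

(* deterministic non-clairvoyant online algorithm: its decisions up to time t
   depend only on the view at time t *)
definition online :: "(binst \<Rightarrow> schedule) \<Rightarrow> bool" where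
  "online A \<longleftrightarrow> (\<forall>I J t. valid_instance I \<and> valid_instance J \<and> view I t = view J t \<longrightarrow>
      (\<forall>i < length (view I t).
         fst (A I i) = fst (A J i) \<and>
         filter (\<lambda>m. fst m \<le> t) (snd (A I i)) = filter (\<lambda>m. fst m \<le> t) (snd (A J i))))"

(* randomized algorithm = random choice (according to prob. space M) of a
   deterministic online algorithm producing feasible schedules *)
definition randomized_alg :: "'w measure \<Rightarrow> ('w \<Rightarrow> binst \<Rightarrow> schedule) \<Rightarrow> bool" where
  "randomized_alg M A \<longleftrightarrow> prob_space M \<and>
     (\<forall>\<omega> \<in> space M. online (A \<omega> ) \<and>
        (\<forall>I. valid_instance I \<longrightarrow> valid_schedule I (A \<omega> I))) \<and>
     (\<forall>I. valid_instance I \<longrightarrow>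
        (\<lambda>\<omega>. cost I (A \<omega> I)) \<in> borel_measurable M \<and>
        (\<lambda>\<omega>. ennreal (migration_cost I (A \<omega> I))) \<in> borel_measurable M)"

definition exp_cost :: "'w measure \<Rightarrow> ('w \<Rightarrow> binst \<Rightarrow> schedule) \<Rightarrow> binst \<Rightarrow> ennreal" where
  "exp_cost M A I = (\<integral>\<^sup>+ \<omega>. cost I (A \<omega> I) \<partial>M)"

definition exp_migration :: "'w measure \<Rightarrow> ('w \<Rightarrow> binst \<Rightarrow> schedule) \<Rightarrow> binst \<Rightarrow> ennreal" where
  "exp_migration M A I = (\<integral>\<^sup>+ \<omega>. ennreal (migration_cost I (A \<omega> I)) \<partial>M)"

end

theory Submission
  imports Defs
begin

(* Let K = floor (1 / (4 alpha)). The adversary releases N = K^2 + 1 items of size 1/K at time 0;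
   all of them except a uniformly random K-subset S depart at time 1, and the items of S stay
   until T = 1 + K N. From time 1 on the items of S fit into one bin, so OPT <= N + (T - 1).
   A non-clairvoyant algorithm fixes the initial bins before it can distinguish the instances,
   putting at most K items into each bin; counting pairs of items that share a bin, a random
   K-subset then meets on average at least K - (K - 1)^2 / (2 K) distinct initial bins. Each of
   these bins stays open during [1, T) unless the items of S in it migrate, and every migration
   costs at least 1/K, whereas the expected migrated size is at most alpha N / K. Averaging over
   S, the expected cost exceeds (K / 4) (N + T - 1). *)

section \<open>Colliding pairs in random subsets\<close>

definition collisions :: "('a::linorder \<Rightarrow> 'b) \<Rightarrow> 'a set \<Rightarrow> ('a \<times> 'a) set" where
  "collisions c S = {p \<in> S \<times> S. fst p < snd p \<and> c (fst p) = c (snd p)}"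

lemma finite_collisions: "finite S \<Longrightarrow> finite (collisions c S)"
  unfolding collisions_def by (rule finite_subset[of _ "S \<times> S"]) auto

lemma card_le_card_image_plus_card_collisions:
  fixes S :: "'a::linorder set"
  assumes "finite S"
  shows "card S \<le> card (c ` S) + card (collisions c S)"
  using assms
proof (induction S rule: finite_linorder_max_induct)
  case empty
  then show ?case by simp
next
  case (insert b S)
  have "b \<notin> S" using insert.hyps(2) by auto
  have fin: "finite (collisions c (insert b S))" using insert.hyps(1) by (simp add: finite_collisions)
  have sub: "collisions c S \<subseteq> collisions c (insert b S)" unfolding collisions_def by auto
  show ?case
  proof (cases "c b \<in> c ` S")
    case True
    then obtain a where "a \<in> S" "c a = c b" by auto
    then have "(a, b) \<in> collisions c (insert b S) - collisions c S"
      using insert.hyps(2) \<open>b \<notin> S\<close> unfolding collisions_def by auto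
    then have "card (collisions c S) < card (collisions c (insert b S))"
      using sub fin by (metis Diff_eq_empty_iff empty_iff psubsetI psubset_card_mono)
    then show ?thesis
      using insert.IH True \<open>b \<notin> S\<close> insert.hyps(1) by (simp add: insert_absorb)
  next
    case False
    then show ?thesis
      using insert.IH card_mono[OF fin sub] \<open>b \<notin> S\<close> insert.hyps(1) by simp
  qed
qed

lemma card_collisions_le:
  fixes A :: "'a::linorder set"
  assumes "finite A" and fibre: "\<And>b. card {a \<in> A. c a = b} \<le> m"
  shows "2 * card (collisions c A) \<le> card A * (m - 1)"
proof -
  let ?P = "collisions c A"
  let ?Q = "prod.swap ` ?P"
  let ?D = "Sigma A (\<lambda>a. {x \<in> A. c x = c a} - {a})"
  have "?P \<union> ?Q = ?D" "?P \<inter> ?Q = {}"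
    unfolding collisions_def by (auto simp: image_iff antisym_conv3)
  then have "card ?D = card ?P + card ?Q"
    using assms(1) by (metis card_Un_disjoint finite_collisions finite_imageI)
  also have "card ?Q = card ?P" by (simp add: card_image)
  finally have "2 * card ?P = (\<Sum>a\<in>A. card ({x \<in> A. c x = c a} - {a}))"
    using assms(1) by (simp add: card_SigmaI)
  also have "\<dots> \<le> (\<Sum>a\<in>A. m - 1)"
    using fibre by (intro sum_mono) (simp add: card_Diff_singleton_if diff_le_mono)
  finally show ?thesis by simp
qed

lemma card_subsets_containing_pair:
  assumes "finite A" "i \<in> A" "j \<in> A" "i \<noteq> j" "2 \<le> k"
  shows "card {S. S \<subseteq> A \<and> card S = k \<and> i \<in> S \<and> j \<in> S} = (card A - 2) choose (k - 2)"
proof -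
  let ?ext = "\<lambda>S. insert i (insert j S)"
  let ?L = "{S. S \<subseteq> A \<and> card S = k \<and> i \<in> S \<and> j \<in> S}"
  let ?R = "{S. S \<subseteq> A - {i, j} \<and> card S = k - 2}"
  have "bij_betw ?ext ?R ?L"
  proof (rule bij_betw_byWitness[where f' = "\<lambda>S. S - {i, j}"])
    show "?ext ` ?R \<subseteq> ?L"
    proof
      fix X assume "X \<in> ?ext ` ?R"
      then obtain S where S: "S \<subseteq> A - {i, j}" "card S = k - 2" "X = ?ext S" by auto
      have "finite S" using S(1) assms(1) finite_subset by blast
      moreover have "i \<notin> S" "j \<notin> S" using S(1) by auto
      ultimately show "X \<in> ?L" using S assms by auto
    qed
    show "(\<lambda>S. S - {i, j}) ` ?L \<subseteq> ?R"
    proof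
      fix X assume "X \<in> (\<lambda>S. S - {i, j}) ` ?L"
      then obtain S where S: "S \<subseteq> A" "i \<in> S" "j \<in> S" "card S = k" "X = S - {i, j}" by auto
      have "finite S" using S(1) assms(1) finite_subset by blast
      then show "X \<in> ?R" using S assms(4) by (auto simp: card_Diff_subset)
    qed
  qed auto
  then have "card ?L = card ?R" by (rule bij_betw_same_card[symmetric])
  also have "\<dots> = card (A - {i, j}) choose (k - 2)" using assms(1) by (intro n_subsets) simp
  finally show ?thesis using assms by (simp add: card_Diff_subset numeral_2_eq_2)
qed

lemma binomial_mult_Suc_Suc:
  "(n choose l) * (Suc (Suc n) * Suc n) = (Suc (Suc n) choose Suc (Suc l)) * (Suc (Suc l) * Suc l)"
proof -
  have "(n choose l) * (Suc (Suc n) * Suc n) = Suc (Suc n) * (Suc n * (n choose l))"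
    by (simp only: mult.commute mult.left_commute)
  also have "\<dots> = (Suc (Suc n) * (Suc n choose Suc l)) * Suc l"
    by (simp only: Suc_times_binomial_eq[of n l] mult.assoc)
  also have "\<dots> = (Suc (Suc n) choose Suc (Suc l)) * (Suc (Suc l) * Suc l)"
    by (simp only: Suc_times_binomial_eq[of "Suc n" "Suc l"] mult.assoc)
  finally show ?thesis .
qed

lemma card_subsets_containing_pair_mult:
  assumes "finite A" "i \<in> A" "j \<in> A" "i \<noteq> j"
  shows "card {S. S \<subseteq> A \<and> card S = k \<and> i \<in> S \<and> j \<in> S} * (card A * (card A - 1))
           = (card A choose k) * (k * (k - 1))"
proof (cases "k < 2")
  case True
  have "\<not> (S \<subseteq> A \<and> card S = k \<and> i \<in> S \<and> j \<in> S)" for S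
  proof
    assume S: "S \<subseteq> A \<and> card S = k \<and> i \<in> S \<and> j \<in> S"
    then have "card {i, j} \<le> card S" using assms(1) by (intro card_mono) (auto simp: finite_subset)
    then show False using S True assms(4) by simp
  qed
  then have "{S. S \<subseteq> A \<and> card S = k \<and> i \<in> S \<and> j \<in> S} = {}" by blast
  moreover have "k * (k - 1) = 0" using True by (cases k) auto
  ultimately show ?thesis by (metis card.empty mult_0 mult_0_right)
next
  case False
  have "2 \<le> card A" using card_mono[of A "{i, j}"] assms by auto
  then obtain n where n: "card A = Suc (Suc n)" by (metis add_2_eq_Suc le_Suc_ex)
  obtain l where l: "k = Suc (Suc l)" using False by (metis add_2_eq_Suc le_Suc_ex not_less)
  have "card {S. S \<subseteq> A \<and> card S = k \<and> i \<in> S \<and> j \<in> S} = n choose l"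
    using card_subsets_containing_pair[OF assms] False by (simp add: n l)
  then show ?thesis using binomial_mult_Suc_Suc[of n l] by (simp only: n l diff_Suc_1)
qed

lemma sum_card_collisions_subsets:
  fixes A :: "'a::linorder set"
  assumes "finite A"
  shows "(\<Sum>S | S \<subseteq> A \<and> card S = k. card (collisions c S)) * (card A * (card A - 1))
           = card (collisions c A) * ((card A choose k) * (k * (k - 1)))"
proof -
  let ?F = "{S. S \<subseteq> A \<and> card S = k}"
  let ?P = "collisions c A"
  let ?in = "\<lambda>S p. fst p \<in> S \<and> snd p \<in> S"
  have finF: "finite ?F" using assms by (intro finite_subset[of ?F "Pow A"]) auto
  have finP: "finite ?P" using assms by (rule finite_collisions)
  have "collisions c S = {p \<in> ?P. ?in S p}" if "S \<in> ?F" for S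
    using that unfolding collisions_def by auto
  then have "(\<Sum>S\<in>?F. card (collisions c S)) = (\<Sum>S\<in>?F. \<Sum>p | p \<in> ?P \<and> ?in S p. 1)"
    by (intro sum.cong) auto
  also have "\<dots> = (\<Sum>p\<in>?P. \<Sum>S | S \<in> ?F \<and> ?in S p. 1)"
    by (rule sum.swap_restrict[OF finF finP])
  also have "\<dots> = (\<Sum>p\<in>?P. card {S \<in> ?F. ?in S p})"
    by simp
  finally have "(\<Sum>S\<in>?F. card (collisions c S)) * (card A * (card A - 1))
      = (\<Sum>p\<in>?P. card {S \<in> ?F. ?in S p} * (card A * (card A - 1)))"
    by (simp add: sum_distrib_right)
  also have "\<dots> = (\<Sum>p\<in>?P. (card A choose k) * (k * (k - 1)))"
  proof (intro sum.cong refl)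
    fix p assume "p \<in> ?P"
    then have "fst p \<in> A" "snd p \<in> A" "fst p \<noteq> snd p" unfolding collisions_def by auto
    moreover have "{S \<in> ?F. ?in S p} = {S. S \<subseteq> A \<and> card S = k \<and> fst p \<in> S \<and> snd p \<in> S}" by auto
    ultimately show "card {S \<in> ?F. ?in S p} * (card A * (card A - 1)) = (card A choose k) * (k * (k - 1))"
      using card_subsets_containing_pair_mult[OF assms] by simp
  qed
  finally show ?thesis by simp
qed

lemma real_mult_pred: "real (k * (k - 1)) = real k * (real k - 1)"
  by (cases k) (auto simp: algebra_simps)

lemma sum_card_collisions_subsets_le:
  fixes A :: "'a::linorder set"
  assumes "finite A" "2 \<le> card A" and fibre: "\<And>b. card {a \<in> A. c a = b} \<le> m"
  shows "real (\<Sum>S | S \<subseteq> A \<and> card S = k. card (collisions c S))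
           \<le> real (card {S. S \<subseteq> A \<and> card S = k})
             * (real k * (real k - 1) * (real m - 1) / (2 * (real (card A) - 1)))"
proof -
  let ?F = "{S. S \<subseteq> A \<and> card S = k}"
  let ?N = "card A"
  define X where "X = (\<Sum>S\<in>?F. card (collisions c S))"
  obtain a where "a \<in> A" using assms(2) by fastforce
  then have "0 < card {x \<in> A. c x = c a}" using assms(1) by (auto simp: card_gt_0_iff)
  then have m: "1 \<le> m" using fibre[of "c a"] by linarith
  have "2 * X * (?N * (?N - 1)) = 2 * card (collisions c A) * (card ?F * (k * (k - 1)))"
    using sum_card_collisions_subsets[OF assms(1)] assms(1) by (simp add: X_def n_subsets)
  also have "\<dots> \<le> ?N * (m - 1) * (card ?F * (k * (k - 1)))"
    using card_collisions_le[OF assms(1) fibre] by simp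
  finally have "?N * (2 * X * (?N - 1)) \<le> ?N * (card ?F * (k * (k - 1)) * (m - 1))"
    by (simp add: algebra_simps)
  then have nat_bound: "2 * X * (?N - 1) \<le> card ?F * (k * (k - 1)) * (m - 1)"
    using assms(2) by simp
  have "real X * (2 * (real ?N - 1)) = real (2 * X * (?N - 1))"
    using assms(2) by (simp add: of_nat_diff)
  also have "\<dots> \<le> real (card ?F * (k * (k - 1)) * (m - 1))"
    using nat_bound by (rule of_nat_mono)
  also have "\<dots> = real (card ?F) * (real k * (real k - 1)) * (real m - 1)"
    unfolding of_nat_mult[of "card ?F * (k * (k - 1))" "m - 1"] of_nat_mult[of "card ?F" "k * (k - 1)"]
      real_mult_pred of_nat_diff[OF m] by simp
  finally have "real X * (2 * (real ?N - 1)) \<le> real (card ?F) * (real k * (real k - 1) * (real m - 1))"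
    by (simp only: mult.assoc)
  then show ?thesis
    unfolding X_def using assms(2) by (simp add: field_simps)
qed

lemma sum_card_image_subsets_ge:
  fixes A :: "'a::linorder set" and c :: "'a \<Rightarrow> 'b"
  assumes "finite A" "2 \<le> card A" and fibre: "\<And>b. card {a \<in> A. c a = b} \<le> m"
  shows "real (card {S. S \<subseteq> A \<and> card S = k})
           * (real k - real k * (real k - 1) * (real m - 1) / (2 * (real (card A) - 1)))
         \<le> (\<Sum>S | S \<subseteq> A \<and> card S = k. real (card (c ` S)))"
proof -
  let ?F = "{S. S \<subseteq> A \<and> card S = k}"
  have "real (card ?F) * real k = (\<Sum>S\<in>?F. real (card S))" by simp
  also have "\<dots> \<le> (\<Sum>S\<in>?F. real (card (c ` S)) + real (card (collisions c S)))"
  proof (rule sum_mono)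
    fix S assume "S \<in> ?F"
    then have "finite S" using assms(1) finite_subset by blast
    then show "real (card S) \<le> real (card (c ` S)) + real (card (collisions c S))"
      unfolding of_nat_add[symmetric] of_nat_le_iff by (rule card_le_card_image_plus_card_collisions)
  qed
  also have "\<dots> = (\<Sum>S\<in>?F. real (card (c ` S))) + real (\<Sum>S\<in>?F. card (collisions c S))"
    by (simp add: sum.distrib)
  finally show ?thesis
    using sum_card_collisions_subsets_le[OF assms, of k] by (simp only: right_diff_distrib)
qed

section \<open>Schedules, cost and the optimum\<close>

lemma bin_of_eq_initial_bin:
  assumes "\<forall>m \<in> set (snd (Sc i)). t < fst m"
  shows "bin_of Sc i t = fst (Sc i)"
proof -
  have "foldl (\<lambda>b m. if fst m \<le> t then snd m else b) b0 ms = b0" if "\<forall>m \<in> set ms. t < fst m" for b0 ms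
    using that by (induction ms arbitrary: b0) (auto simp: not_le)
  from this[OF assms] show ?thesis unfolding bin_of_def .
qed

lemma finite_present: "finite {i. present I i t}"
  by (rule finite_subset[of _ "{..<length I}"]) (auto simp: present_def)

lemma nonempty_bins_pos: "present I i t \<Longrightarrow> 0 < nonempty_bins I Sc t"
  unfolding nonempty_bins_def by (auto simp: card_gt_0_iff finite_present)

lemma card_initial_bins_le_nonempty_bins:
  assumes "U \<subseteq> {i. present I i t}" and "\<And>i. i \<in> U \<Longrightarrow> snd (Sc i) = []"
  shows "card ((\<lambda>i. fst (Sc i)) ` U) \<le> nonempty_bins I Sc t"
proof -
  have "(\<lambda>i. fst (Sc i)) ` U \<subseteq> (\<lambda>i. bin_of Sc i t) ` {i. present I i t}"
    using assms by (force simp: bin_of_def)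
  then show ?thesis unfolding nonempty_bins_def by (intro card_mono) (simp_all add: finite_present)
qed

lemma cost_ge_interval:
  assumes "a \<le> b" and "\<And>t. a \<le> t \<Longrightarrow> t < b \<Longrightarrow> n \<le> nonempty_bins I Sc t"
  shows "ennreal ((b - a) * real n) \<le> cost I Sc"
proof -
  have "ennreal ((b - a) * real n) = (\<integral>\<^sup>+ t. ennreal (real n) * indicator {a..<b} t \<partial>lborel)"
    using assms(1) by (simp add: nn_integral_cmult ennreal_mult mult.commute)
  also have "\<dots> \<le> cost I Sc"
    unfolding cost_def using assms(2) by (intro nn_integral_mono) (auto simp: indicator_def)
  finally show ?thesis .
qed

lemma migration_cost_nonneg: "valid_instance I \<Longrightarrow> 0 \<le> migration_cost I Sc"
  unfolding migration_cost_def valid_instance_def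
  by (intro sum_nonneg mult_nonneg_nonneg) (auto simp: nth_mem)

lemma sum_sz_le_migration_cost:
  assumes I: "valid_instance I" and "U \<subseteq> {..<length I}" and "\<And>i. i \<in> U \<Longrightarrow> snd (Sc i) \<noteq> []"
  shows "(\<Sum>i\<in>U. sz (I ! i)) \<le> migration_cost I Sc"
proof -
  have sz: "0 \<le> sz (I ! i)" if "i < length I" for i
    using I that by (auto simp: valid_instance_def nth_mem)
  have "(\<Sum>i\<in>U. sz (I ! i)) \<le> (\<Sum>i\<in>U. sz (I ! i) * real (length (snd (Sc i))))"
  proof (rule sum_mono)
    fix i assume "i \<in> U"
    then have "1 \<le> real (length (snd (Sc i)))" "0 \<le> sz (I ! i)" using assms sz by (auto simp: Suc_le_eq)
    then show "sz (I ! i) \<le> sz (I ! i) * real (length (snd (Sc i)))"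
      by (metis mult.right_neutral mult_left_mono)
  qed
  also have "\<dots> \<le> migration_cost I Sc"
    unfolding migration_cost_def using assms(2) sz by (intro sum_mono2) auto
  finally show ?thesis .
qed

lemma opt_at_le:
  assumes "\<And>i. present I i t \<Longrightarrow> f i < k"
    and "\<And>j. j < k \<Longrightarrow> (\<Sum>i | present I i t \<and> f i = j. sz (I ! i)) \<le> 1"
  shows "opt_at I t \<le> k"
  unfolding opt_at_def by (rule Least_le) (use assms in blast)

lemma opt_at_le_card_present:
  assumes "valid_instance I"
  shows "opt_at I t \<le> card {i. present I i t}"
proof -
  let ?P = "{i. present I i t}"
  obtain h where h: "bij_betw h ?P {0..<card ?P}"
    using ex_bij_betw_finite_nat[OF finite_present] by blast
  show ?thesis
  proof (rule opt_at_le[where f = h])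
    fix i assume "present I i t"
    then show "h i < card ?P" using bij_betw_apply[OF h] by auto
  next
    fix j assume "j < card ?P"
    then have "j \<in> h ` ?P" using bij_betw_imp_surj_on[OF h] by simp
    then obtain i where i: "present I i t" "h i = j" by auto
    then have "{i'. present I i' t \<and> h i' = j} = {i}"
      using inj_on_eq_iff[OF bij_betw_imp_inj_on[OF h]] by auto
    moreover have "sz (I ! i) \<le> 1"
      using i assms by (auto simp: valid_instance_def present_def nth_mem)
    ultimately show "(\<Sum>i' | present I i' t \<and> h i' = j. sz (I ! i')) \<le> 1" by simp
  qed
qed

lemma opt_at_le_1: "(\<Sum>i | present I i t. sz (I ! i)) \<le> 1 \<Longrightarrow> opt_at I t \<le> 1"
  by (rule opt_at_le[where f = "\<lambda>_. 0"]) auto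

lemma exp_cost_ge:
  assumes "randomized_alg M A" "valid_instance I" "\<And>Sc. valid_schedule I Sc \<Longrightarrow> c \<le> cost I Sc"
  shows "c \<le> exp_cost M A I"
proof -
  have "prob_space M" using assms(1) by (simp add: randomized_alg_def)
  then have "c = (\<integral>\<^sup>+ \<omega>. c \<partial>M)" by (simp add: prob_space.emeasure_space_1)
  also have "\<dots> \<le> exp_cost M A I"
    unfolding exp_cost_def using assms by (intro nn_integral_mono) (auto simp: randomized_alg_def)
  finally show ?thesis .
qed

section \<open>The adversary\<close>

definition adversary_instance :: "nat \<Rightarrow> nat \<Rightarrow> real \<Rightarrow> nat set \<Rightarrow> binst" where
  "adversary_instance K N T S = map (\<lambda>i. (0, 1 / real K, if i \<in> S then T else 1)) [0..<N]"

lemma length_adversary_instance [simp]: "length (adversary_instance K N T S) = N"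
  by (simp add: adversary_instance_def)

lemma adversary_instance_nth [simp]:
  assumes "i < N"
  shows "arr (adversary_instance K N T S ! i) = 0"
    and "sz (adversary_instance K N T S ! i) = 1 / real K"
    and "dur (adversary_instance K N T S ! i) = (if i \<in> S then T else 1)"
  using assms by (simp_all add: adversary_instance_def arr_def sz_def dur_def)

lemma valid_adversary_instance: "0 < T \<Longrightarrow> valid_instance (adversary_instance K N T S)"
  unfolding valid_instance_def
  by (auto simp: adversary_instance_def arr_def sz_def dur_def sorted_iff_nth_mono divide_le_eq_1)

lemma present_adversary_instance:
  "present (adversary_instance K N T S) i t \<longleftrightarrow> i < N \<and> 0 \<le> t \<and> t < (if i \<in> S then T else 1)"
  by (auto simp: present_def)

lemma initial_bin_adversary_instance:
  assumes "online Al" "0 < T" "0 < T'" "i < N"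
  shows "fst (Al (adversary_instance K N T S) i) = fst (Al (adversary_instance K N T' S') i)"
proof -
  have "view (adversary_instance K N T S) 0 = map (\<lambda>_. (0, 1 / real K, None)) [0..<N]"
    if "0 < T" for T S
    using that by (auto simp: view_def adversary_instance_def arr_def sz_def dur_def)
  then show ?thesis
    using assms valid_adversary_instance unfolding online_def by (metis length_map length_upt minus_nat.diff_0)
qed

lemma card_initial_bin_adversary_instance_le:
  assumes "1 \<le> K" "0 < T" and V: "valid_schedule (adversary_instance K N T S) Sc"
  shows "card {i \<in> {..<N}. fst (Sc i) = b} \<le> K"
proof -
  let ?I = "adversary_instance K N T S"
  let ?B = "{i \<in> {..<N}. fst (Sc i) = b}"
  have "bin_of Sc i 0 = fst (Sc i)" if "i < N" for i
    using V that by (intro bin_of_eq_initial_bin) (auto simp: valid_schedule_def)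
  then have "{i. present ?I i 0 \<and> bin_of Sc i 0 = b} = ?B"
    using assms(2) by (auto simp: present_adversary_instance)
  then have "(\<Sum>i\<in>?B. sz (?I ! i)) \<le> 1"
    using V unfolding valid_schedule_def by metis
  then have "real (card ?B) / real K \<le> 1" by simp
  then show ?thesis using assms(1) by (simp add: field_simps)
qed

lemma OPT_adversary_instance_le:
  assumes "1 \<le> K" "S \<subseteq> {..<N}" "card S = K" "1 < T"
  shows "OPT (adversary_instance K N T S) \<le> ennreal (real N + (T - 1))"
proof -
  let ?I = "adversary_instance K N T S"
  have valid: "valid_instance ?I" using assms(4) by (simp add: valid_adversary_instance)
  have "ennreal (real (opt_at ?I t)) \<le> ennreal (real N) * indicator {0..<1} t + indicator {1..<T} t" for t
  proof -
    consider "0 \<le> t" "t < 1" | "1 \<le> t" "t < T" | "t < 0 \<or> T \<le> t" by linarith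
    then show ?thesis
    proof cases
      case 1
      then have "{i. present ?I i t} = {..<N}" using assms(4) by (auto simp: present_adversary_instance)
      then show ?thesis using 1 opt_at_le_card_present[OF valid, of t] by (simp add: indicator_def)
    next
      case 2
      then have "{i. present ?I i t} = S" using assms(2) by (auto simp: present_adversary_instance)
      moreover have "(\<Sum>i\<in>S. sz (?I ! i)) = 1"
        using assms(1-3) by (simp add: subset_eq)
      ultimately have "opt_at ?I t \<le> 1" by (intro opt_at_le_1) simp
      then show ?thesis using 2 by (simp add: indicator_def)
    next
      case 3
      then have "{i. present ?I i t} = {}" using assms(4) by (auto simp: present_adversary_instance)
      then show ?thesis using opt_at_le_card_present[OF valid, of t] by simp
    qed
  qed
  then have "OPT ?I \<le> (\<integral>\<^sup>+ t. ennreal (real N) * indicator {0..<1} t + indicator {1..<T} t \<partial>lborel)"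
    unfolding OPT_def by (rule nn_integral_mono)
  also have "\<dots> = ennreal (real N) + ennreal (T - 1)"
    using assms(4) by (simp add: nn_integral_add nn_integral_cmult)
  also have "\<dots> = ennreal (real N + (T - 1))"
    using assms(4) by simp
  finally show ?thesis .
qed

lemma cost_adversary_instance_ge:
  assumes "1 \<le> K" "S \<subseteq> {..<N}" "1 < T"
  shows "ennreal ((T - 1) * real (card ((\<lambda>i. fst (Sc i)) ` S)))
           \<le> cost (adversary_instance K N T S) Sc
             + ennreal ((T - 1) * real K * migration_cost (adversary_instance K N T S) Sc)"
proof -
  let ?I = "adversary_instance K N T S"
  let ?init = "\<lambda>i. fst (Sc i)"
  define U where "U = {i \<in> S. snd (Sc i) = []}"
  have "finite S" using assms(2) finite_subset by blast
  have "{i. present ?I i t} = S" if "1 \<le> t" "t < T" for t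
    using that assms(2) by (auto simp: present_adversary_instance)
  then have unmigrated: "ennreal ((T - 1) * real (card (?init ` U))) \<le> cost ?I Sc"
    using assms(3) by (intro cost_ge_interval card_initial_bins_le_nonempty_bins) (auto simp: U_def)
  have mg: "0 \<le> migration_cost ?I Sc"
    using assms(3) by (simp add: migration_cost_nonneg valid_adversary_instance)
  have "real (card (S - U)) / real K = (\<Sum>i\<in>S - U. 1 / real K)" by simp
  also have "\<dots> = (\<Sum>i\<in>S - U. sz (?I ! i))"
    using assms(2) by (intro sum.cong) auto
  also have "\<dots> \<le> migration_cost ?I Sc"
    using assms(2,3) by (intro sum_sz_le_migration_cost valid_adversary_instance) (auto simp: U_def)
  finally have migrated: "real (card (S - U)) \<le> real K * migration_cost ?I Sc"
    using assms(1) by (simp add: field_simps)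
  have "?init ` S = ?init ` U \<union> ?init ` (S - U)" unfolding U_def by auto
  then have "card (?init ` S) \<le> card (?init ` U) + card (?init ` (S - U))" by (metis card_Un_le)
  also have "\<dots> \<le> card (?init ` U) + card (S - U)"
    using \<open>finite S\<close> by (simp add: card_image_le)
  finally have "real (card (?init ` S)) \<le> real (card (?init ` U)) + real K * migration_cost ?I Sc"
    using migrated by linarith
  then have "(T - 1) * real (card (?init ` S))
      \<le> (T - 1) * (real (card (?init ` U)) + real K * migration_cost ?I Sc)"
    using assms(3) by (intro mult_left_mono) auto
  then have "(T - 1) * real (card (?init ` S))
      \<le> (T - 1) * real (card (?init ` U)) + (T - 1) * real K * migration_cost ?I Sc"
    by (simp only: distrib_left mult.assoc)
  then have "ennreal ((T - 1) * real (card (?init ` S)))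
      \<le> ennreal ((T - 1) * real (card (?init ` U))) + ennreal ((T - 1) * real K * migration_cost ?I Sc)"
    using assms(3) mg by (simp add: ennreal_plus[symmetric] del: ennreal_plus)
  then show ?thesis using unmigrated by (meson add_right_mono order_trans)
qed

lemma sum_exp_cost_adversary_instance_ge:
  assumes alg: "randomized_alg M A" and "1 \<le> K" "1 < T" "F \<subseteq> Pow {..<N}"
    and L: "\<And>c :: nat \<Rightarrow> nat. (\<And>b. card {i \<in> {..<N}. c i = b} \<le> K) \<Longrightarrow>
              L \<le> (\<Sum>S\<in>F. real (card (c ` S)))"
  shows "ennreal ((T - 1) * L)
           \<le> (\<Sum>S\<in>F. exp_cost M A (adversary_instance K N T S))
             + ennreal ((T - 1) * real K) * (\<Sum>S\<in>F. exp_migration M A (adversary_instance K N T S))"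
proof -
  let ?I = "adversary_instance K N T"
  let ?cost = "\<lambda>\<omega> S. cost (?I S) (A \<omega> (?I S))"
  let ?mig = "\<lambda>\<omega> S. ennreal (migration_cost (?I S) (A \<omega> (?I S)))"
  have valid: "valid_instance (?I S)" for S using assms(3) by (simp add: valid_adversary_instance)
  have pointwise: "ennreal ((T - 1) * L)
      \<le> (\<Sum>S\<in>F. ?cost \<omega> S) + ennreal ((T - 1) * real K) * (\<Sum>S\<in>F. ?mig \<omega> S)"
    if "\<omega> \<in> space M" for \<omega>
  proof -
    define c where "c i = fst (A \<omega> (?I {}) i)" for i
    have online: "online (A \<omega>)" and sched: "\<And>S. valid_schedule (?I S) (A \<omega> (?I S))"
      using alg that valid by (auto simp: randomized_alg_def)
    have "L \<le> (\<Sum>S\<in>F. real (card (c ` S)))"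
      using L card_initial_bin_adversary_instance_le[OF assms(2) _ sched] assms(3) unfolding c_def by simp
    then have "(T - 1) * L \<le> (\<Sum>S\<in>F. (T - 1) * real (card (c ` S)))"
      unfolding sum_distrib_left[symmetric] using assms(3) by (intro mult_left_mono) auto
    then have "ennreal ((T - 1) * L) \<le> (\<Sum>S\<in>F. ennreal ((T - 1) * real (card (c ` S))))"
      using assms(3) by (subst sum_ennreal) (auto intro: ennreal_leI)
    also have "\<dots> \<le> (\<Sum>S\<in>F. ?cost \<omega> S + ennreal ((T - 1) * real K) * ?mig \<omega> S)"
    proof (rule sum_mono)
      fix S assume "S \<in> F"
      then have S: "S \<subseteq> {..<N}" using assms(4) by auto
      then have "(\<lambda>i. fst (A \<omega> (?I S) i)) ` S = c ` S"
        using assms(3) initial_bin_adversary_instance[OF online] unfolding c_def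
        by (intro image_cong) auto
      moreover have "ennreal ((T - 1) * real K * migration_cost (?I S) (A \<omega> (?I S)))
          = ennreal ((T - 1) * real K) * ?mig \<omega> S"
        using migration_cost_nonneg[OF valid] by (rule ennreal_mult'')
      ultimately show "ennreal ((T - 1) * real (card (c ` S))) \<le> ?cost \<omega> S + ennreal ((T - 1) * real K) * ?mig \<omega> S"
        using cost_adversary_instance_ge[OF assms(2) S assms(3), where Sc = "A \<omega> (?I S)"] by simp
    qed
    also have "\<dots> = (\<Sum>S\<in>F. ?cost \<omega> S) + ennreal ((T - 1) * real K) * (\<Sum>S\<in>F. ?mig \<omega> S)"
      by (simp add: sum.distrib sum_distrib_left)
    finally show ?thesis .
  qed
  have "prob_space M" using alg by (simp add: randomized_alg_def)
  then have "ennreal ((T - 1) * L) = (\<integral>\<^sup>+ \<omega>. ennreal ((T - 1) * L) \<partial>M)"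
    by (simp add: prob_space.emeasure_space_1)
  also have "\<dots> \<le> (\<integral>\<^sup>+ \<omega>. (\<Sum>S\<in>F. ?cost \<omega> S)
      + ennreal ((T - 1) * real K) * (\<Sum>S\<in>F. ?mig \<omega> S) \<partial>M)"
    using pointwise by (rule nn_integral_mono)
  also have "\<dots> = (\<Sum>S\<in>F. exp_cost M A (?I S))
      + ennreal ((T - 1) * real K) * (\<Sum>S\<in>F. exp_migration M A (?I S))"
  proof -
    have "(\<lambda>\<omega>. ?cost \<omega> S) \<in> borel_measurable M"
      and "(\<lambda>\<omega>. ?mig \<omega> S) \<in> borel_measurable M" for S
      using alg valid by (auto simp: randomized_alg_def)
    then show ?thesis
      by (simp add: nn_integral_add nn_integral_cmult nn_integral_sum borel_measurable_sum
          exp_cost_def exp_migration_def)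
  qed
  finally show ?thesis .
qed

lemma adversary_parameters_inequality:
  fixes k a b n d :: real
  assumes "1 \<le> k" "a * k \<le> 1 / 4" "b < k / 4" "n = k * k + 1" "d = k * n"
  shows "b * (n + d) + d * a * n < d * (k - k * (k - 1) * (k - 1) / (2 * (n - 1)))"
proof -
  have n: "0 < n" using assms(4) mult_nonneg_nonneg[of k k] assms(1) by linarith
  have "0 < n + d" using n assms(1,5) mult_pos_pos[of k n] by linarith
  with assms(3) have "b * (n + d) < k / 4 * (n + d)" by (rule mult_strict_right_mono)
  moreover have "d * a * n \<le> n * n / 4"
  proof -
    have "d * a * n = (a * k) * (n * n)" using assms(5) by (simp add: algebra_simps)
    also have "\<dots> \<le> 1 / 4 * (n * n)" using assms(2) by (intro mult_right_mono) auto
    finally show ?thesis by simp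
  qed
  moreover have "d * (k - k * (k - 1) * (k - 1) / (2 * (n - 1))) = n * (k * k - (k - 1) * (k - 1) / 2)"
    using assms(1,4,5) by (simp add: field_simps)
  moreover have "k / 4 * (n + d) + n * n / 4 \<le> n * (k * k - (k - 1) * (k - 1) / 2)"
  proof -
    have "k / 4 * (1 + k) + n / 4 \<le> k * k - (k - 1) * (k - 1) / 2"
      using assms(1,4) by (simp add: field_simps power2_eq_square)
    then have "n * (k / 4 * (1 + k) + n / 4) \<le> n * (k * k - (k - 1) * (k - 1) / 2)"
      using n by (intro mult_left_mono) auto
    then show ?thesis using assms(5) by (simp add: algebra_simps)
  qed
  ultimately show ?thesis by linarith
qed

lemma total_size_adversary_instance: "total_size (adversary_instance K N T S) = real N / real K"
  by (simp add: total_size_def)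

lemma sum_exp_cost_adversary_instance_le:
  assumes budget: "\<forall>I. valid_instance I \<longrightarrow> exp_migration M A I \<le> ennreal (\<alpha> * total_size I)"
    and K: "1 \<le> K" and T: "1 < T" and "0 \<le> \<alpha>" "0 \<le> \<beta>"
    and F: "F \<subseteq> {S. S \<subseteq> {..<N} \<and> card S = K}"
    and cheap: "\<And>S. S \<in> F \<Longrightarrow>
                  exp_cost M A (adversary_instance K N T S) \<le> ennreal \<beta> * OPT (adversary_instance K N T S)"
  shows "(\<Sum>S\<in>F. exp_cost M A (adversary_instance K N T S))
           + ennreal ((T - 1) * real K) * (\<Sum>S\<in>F. exp_migration M A (adversary_instance K N T S))
         \<le> ennreal (real (card F) * (\<beta> * (real N + (T - 1)) + (T - 1) * \<alpha> * real N))"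
proof -
  let ?I = "adversary_instance K N T"
  have nonneg: "0 \<le> \<beta> * (real N + (T - 1))" "0 \<le> \<alpha> * (real N / real K)" "0 \<le> (T - 1) * real K"
    using assms(3-5) by auto
  have "(\<Sum>S\<in>F. exp_cost M A (?I S)) + ennreal ((T - 1) * real K) * (\<Sum>S\<in>F. exp_migration M A (?I S))
      \<le> (\<Sum>S\<in>F. ennreal (\<beta> * (real N + (T - 1))))
        + ennreal ((T - 1) * real K) * (\<Sum>S\<in>F. ennreal (\<alpha> * (real N / real K)))"
  proof (intro add_mono mult_left_mono sum_mono)
    fix S assume "S \<in> F"
    have "exp_cost M A (?I S) \<le> ennreal \<beta> * OPT (?I S)" using cheap[OF \<open>S \<in> F\<close>] .
    also have "\<dots> \<le> ennreal \<beta> * ennreal (real N + (T - 1))"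
      using OPT_adversary_instance_le[OF K _ _ T] \<open>S \<in> F\<close> F by (intro mult_left_mono) auto
    finally show "exp_cost M A (?I S) \<le> ennreal (\<beta> * (real N + (T - 1)))"
      using T \<open>0 \<le> \<beta>\<close> by (simp add: ennreal_mult)
    have "exp_migration M A (?I S) \<le> ennreal (\<alpha> * total_size (?I S))"
      using budget T by (simp add: valid_adversary_instance)
    then show "exp_migration M A (?I S) \<le> ennreal (\<alpha> * (real N / real K))"
      by (simp only: total_size_adversary_instance)
  qed auto
  also have "\<dots> = ennreal (real (card F) * (\<beta> * (real N + (T - 1)))
      + (T - 1) * real K * (real (card F) * (\<alpha> * (real N / real K))))"
  proof -
    have sum_const: "(\<Sum>S\<in>F. ennreal x) = ennreal (real (card F) * x)" if "0 \<le> x" for x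
      using that by (subst sum_ennreal) auto
    show ?thesis using nonneg
      by (simp only: sum_const ennreal_mult[symmetric] ennreal_plus[symmetric]
          mult_nonneg_nonneg of_nat_0_le_iff add_nonneg_nonneg)
  qed
  also have "\<dots> = ennreal (real (card F) * (\<beta> * (real N + (T - 1)) + (T - 1) * \<alpha> * real N))"
    using K by (intro arg_cong[where f = ennreal]) (simp add: field_simps)
  finally show ?thesis .
qed

lemma exists_costly_instance:
  assumes alg: "randomized_alg M A"
    and budget: "\<forall>I. valid_instance I \<longrightarrow> exp_migration M A I \<le> ennreal (\<alpha> * total_size I)"
    and K: "1 \<le> K" and \<alpha>: "0 \<le> \<alpha>" "\<alpha> * real K \<le> 1 / 4" and \<beta>: "\<beta> < real K / 4"
  shows "\<exists>I. valid_instance I \<and> ennreal \<beta> * OPT I < exp_cost M A I"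
proof (rule ccontr)
  assume not_costly: "\<not> ?thesis"
  define N where "N = K * K + 1"
  define T where "T = 1 + real K * real N"
  define F where "F = {S. S \<subseteq> {..<N} \<and> card S = K}"
  \<comment> \<open>\<open>ennreal\<close> truncates negative reals, so only \<open>max \<beta> 0\<close> converts back faithfully\<close>
  define \<beta>' where "\<beta>' = max \<beta> 0"
  define D where "D = real K - real K * (real K - 1) * (real K - 1) / (2 * (real N - 1))"
  let ?I = "adversary_instance K N T"
  have N: "2 \<le> N" using K unfolding N_def by (simp add: Suc_le_eq)
  have T: "1 < T" using K N unfolding T_def by simp
  have "K \<le> N" unfolding N_def using le_square[of K] by linarith
  then have F: "0 < card F" unfolding F_def by (simp add: n_subsets zero_less_binomial_iff)
  have cheap: "exp_cost M A (?I S) \<le> ennreal \<beta>' * OPT (?I S)" for S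
  proof -
    have "exp_cost M A (?I S) \<le> ennreal \<beta> * OPT (?I S)"
      using not_costly T valid_adversary_instance[of T] by (meson not_less less_trans zero_less_one)
    also have "\<dots> \<le> ennreal \<beta>' * OPT (?I S)"
      unfolding \<beta>'_def by (intro mult_right_mono ennreal_leI) auto
    finally show ?thesis .
  qed
  have "ennreal ((T - 1) * (real (card F) * D))
      \<le> (\<Sum>S\<in>F. exp_cost M A (?I S)) + ennreal ((T - 1) * real K) * (\<Sum>S\<in>F. exp_migration M A (?I S))"
    using sum_card_image_subsets_ge[of "{..<N}"] N unfolding F_def D_def
    by (intro sum_exp_cost_adversary_instance_ge[OF alg K T]) auto
  also have "\<dots> \<le> ennreal (real (card F) * (\<beta>' * (real N + (T - 1)) + (T - 1) * \<alpha> * real N))"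
    using cheap \<alpha>(1) unfolding F_def \<beta>'_def
    by (intro sum_exp_cost_adversary_instance_le[OF budget K T]) auto
  finally have "(T - 1) * (real (card F) * D)
      \<le> real (card F) * (\<beta>' * (real N + (T - 1)) + (T - 1) * \<alpha> * real N)"
    using T \<alpha>(1) by (subst (asm) ennreal_le_iff) (auto simp: \<beta>'_def)
  moreover have "\<beta>' * (real N + (T - 1)) + (T - 1) * \<alpha> * real N < (T - 1) * D"
    unfolding D_def using K \<alpha>(2) \<beta>
    by (intro adversary_parameters_inequality) (auto simp: \<beta>'_def N_def T_def)
  then have "real (card F) * (\<beta>' * (real N + (T - 1)) + (T - 1) * \<alpha> * real N)
      < (T - 1) * (real (card F) * D)"
    using F by (simp add: mult.left_commute)
  ultimately show False by linarith
qed

lemma exists_instance_with_positive_cost: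
  assumes "randomized_alg M A"
  shows "\<exists>I. valid_instance I \<and> 0 < exp_cost M A I"
proof -
  let ?I = "adversary_instance 1 1 1 {}"
  have "1 \<le> nonempty_bins ?I Sc t" if "0 \<le> t" "t < 1" for Sc t
    using nonempty_bins_pos[of ?I 0 t Sc] that by (simp add: present_adversary_instance)
  then have "ennreal ((1 - 0) * real 1) \<le> cost ?I Sc" for Sc
    by (intro cost_ge_interval) auto
  then have "1 \<le> exp_cost M A ?I"
    using assms by (intro exp_cost_ge) (auto simp: valid_adversary_instance)
  then show ?thesis
    by (intro exI[of _ ?I]) (auto simp: valid_adversary_instance less_le_trans[OF zero_less_one])
qed

theorem theorem23:
  fixes M :: "'w measure" and A :: "'w \<Rightarrow> binst \<Rightarrow> schedule" and \<alpha> :: real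
  assumes "0 < \<alpha>" and "\<alpha> < 1"
    and "randomized_alg M A"
    and "\<forall>I. valid_instance I \<longrightarrow> exp_migration M A I \<le> ennreal (\<alpha> * total_size I)"
  shows "\<forall>\<beta> < (1/4) * real_of_int \<lfloor>1 / (4 * \<alpha>)\<rfloor>.
           \<exists>I. valid_instance I \<and> ennreal \<beta> * OPT I < exp_cost M A I"
proof (intro allI impI)
  fix \<beta> :: real
  assume \<beta>: "\<beta> < (1/4) * real_of_int \<lfloor>1 / (4 * \<alpha>)\<rfloor>"
  define K where "K = nat \<lfloor>1 / (4 * \<alpha>)\<rfloor>"
  have K: "real K = real_of_int \<lfloor>1 / (4 * \<alpha>)\<rfloor>"
    using assms(1) by (simp add: K_def)
  have "\<alpha> * real K \<le> \<alpha> * (1 / (4 * \<alpha>))"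
    unfolding K using assms(1) by (intro mult_left_mono) auto
  then have \<alpha>K: "\<alpha> * real K \<le> 1 / 4" using assms(1) by simp
  show "\<exists>I. valid_instance I \<and> ennreal \<beta> * OPT I < exp_cost M A I"
  proof (cases "K = 0")
    case True
    then have "ennreal \<beta> = 0" using \<beta> K by (simp add: ennreal_eq_0_iff)
    then show ?thesis using exists_instance_with_positive_cost[OF assms(3)] by simp
  next
    case False
    then show ?thesis
      using exists_costly_instance[OF assms(3,4) _ _ \<alpha>K] \<beta> K assms(1) by simp
  qed
qed

end
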